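(* The function $$\mathcal{L}(\boldsymbol{U},\boldsymbol{V})=\frac1n\sum_{i=1}^n\big(\langle\boldsymbol{P}_i,\boldsymbol{U}\boldsymbol{U}^\top-\boldsymbol{V}\boldsymbol{V}^\top\rangle-y_i^*\big)^2+\frac\lambda2\,\mathrm{tr}(\boldsymbol{U}\boldsymbol{U}^\top+\boldsymbol{V}\boldsymbol{V}^\top),\qquad \boldsymbol{U},\boldsymbol{V}\in\mathbb{R}^{d\times d},$$ satisfies: (1) all local minima of $\mathcal{L}$ are global minima; (2) at any saddle point $(\boldsymbol{U}_s,\boldsymbol{V}_s)$ of $\mathcal{L}$ there is a direction $(\boldsymbol{\mathcal{E}}_{\boldsymbol{U}},\boldsymbol{\mathcal{E}}_{\boldsymbol{V}})$ with $\mathrm{vec}(\boldsymbol{\mathcal{E}}_{\boldsymbol{U}},\boldsymbol{\mathcal{E}}_{\boldsymbol{V}})^\top\nabla^2\mathcal{L}(\boldsymbol{U}_s,\boldsymbol{V}_s)\,\mathrm{vec}(\boldsymbol{\mathcal{E}}_{\boldsymbol{U}},\boldsymbol{\mathcal{E}}_{\boldsymbol{V}})<0$.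
   Context: $\lambda>0$. Observed index pairs $(i_k,j_k)\in[d]\times[d]$, $k\in[n]$, with $\boldsymbol{P}_k:=\frac12(\boldsymbol{e}_{i_k}\boldsymbol{e}_{j_k}^\top+\boldsymbol{e}_{j_k}\boldsymbol{e}_{i_k}^\top)$, and targets $y_k^*\in\mathbb{R}$ (the observed entries of a symmetric matrix). A saddle point is a stationary point that is not a local extremum. *)

theory Defs
  imports "HOL-Analysis.Analysis"
begin

definition outer :: "real^'d \<Rightarrow> real^'d \<Rightarrow> real^'d^'d" where
  "outer u v = (\<chi> a b. u $ a * v $ b)"

definition Pmat :: "'d::finite \<Rightarrow> 'd \<Rightarrow> real^'d^'d" where
  "Pmat i j = (1/2) *\<^sub>R (outer (axis i 1) (axis j 1) + outer (axis j 1) (axis i 1))"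

definition frob :: "real^'d^'d \<Rightarrow> real^'d^'d \<Rightarrow> real" where
  "frob A B = trace (transpose A ** B)"

definition lossL :: "nat \<Rightarrow> (nat \<Rightarrow> 'd::finite) \<Rightarrow> (nat \<Rightarrow> 'd) \<Rightarrow> (nat \<Rightarrow> real) \<Rightarrow> real
      \<Rightarrow> (real^'d^'d) \<times> (real^'d^'d) \<Rightarrow> real" where
  "lossL n ii jj y lam UV =
     (let U = fst UV; V = snd UV in
       (1 / real n) * (\<Sum>k<n. (frob (Pmat (ii k) (jj k)) (U ** transpose U - V ** transpose V) - y k)^2)
       + (lam / 2) * trace (U ** transpose U + V ** transpose V))"

definition is_local_min :: "('a::metric_space \<Rightarrow> real) \<Rightarrow> 'a \<Rightarrow> bool" where
  "is_local_min f x \<longleftrightarrow> (\<exists>e>0. \<forall>y. dist y x < e \<longrightarrow> f x \<le> f y)"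

definition is_local_max :: "('a::metric_space \<Rightarrow> real) \<Rightarrow> 'a \<Rightarrow> bool" where
  "is_local_max f x \<longleftrightarrow> (\<exists>e>0. \<forall>y. dist y x < e \<longrightarrow> f y \<le> f x)"

definition is_global_min :: "('a \<Rightarrow> real) \<Rightarrow> 'a \<Rightarrow> bool" where
  "is_global_min f x \<longleftrightarrow> (\<forall>y. f x \<le> f y)"

definition is_stationary :: "('a::real_normed_vector \<Rightarrow> real) \<Rightarrow> 'a \<Rightarrow> bool" where
  "is_stationary f x \<longleftrightarrow> (f has_derivative (\<lambda>h. 0)) (at x)"

definition is_saddle :: "('a::real_normed_vector \<Rightarrow> real) \<Rightarrow> 'a \<Rightarrow> bool" where
  "is_saddle f x \<longleftrightarrow> is_stationary f x \<and> \<not> is_local_min f x \<and> \<not> is_local_max f x"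

text \<open>Hessian quadratic form h^T (nabla^2 f)(x) h, i.e. the second Frechet derivative
  D^2 f(x)[h,h], obtained by differentiating y \<mapsto> Df(y)[h] at x in direction h.\<close>
definition hess_quad :: "('a::real_normed_vector \<Rightarrow> real) \<Rightarrow> 'a \<Rightarrow> 'a \<Rightarrow> real" where
  "hess_quad f x h = frechet_derivative (\<lambda>y. frechet_derivative f (at y) h) (at x) h"

end

theory Submission
  imports Defs
begin

text \<open>
  Write X = U U^T - V V^T and let G be the gradient at X of the convex data-fit term
  f(X) = (1/n) \<Sum>_k (\<langle>P_k, X\<rangle> - y_k)^2.

  If (U, V) is stationary and both 2 G + \<lambda> I and -2 G + \<lambda> I are positive semidefinite, it is
  a global minimum: convexity of f bounds the loss at any (U', V') below by f(X) - \<langle>G, X\<rangle> plus the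
  two forms summed over the columns of U' and of V', and stationarity in the radial direction gives
  \<lambda> (|U|^2 + |V|^2) = -2 \<langle>G, X\<rangle>, so this bound is the loss at (U, V).

  Otherwise, say w^T (2 G + \<lambda> I) w < 0. Then U is singular, for if U e = w the derivative in the
  direction (w e^T, 0) would be this negative number. For a nonzero a with U a = 0 the direction
  h = (w a^T, 0) leaves X unchanged to first order, so along (U, V) + t h the loss is exactly
  L + (t^2/2) |a|^2 w^T (2 G + \<lambda> I) w + c t^4: the point is not a local minimum, and
  the Hessian is negative along h.
\<close>

lemma bounded_bilinear_matrix_matrix_mult:
  "bounded_bilinear ((**) :: real^'m^'n \<Rightarrow> real^'k^'m \<Rightarrow> real^'k^'n)"
  unfolding bilinear_conv_bounded_bilinear[symmetric] bilinear_def linear_iff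
  by (auto simp: vec_eq_iff matrix_matrix_mult_def sum.distrib algebra_simps sum_distrib_left)

lemma transpose_zero [simp]: "transpose 0 = 0"
  by (simp add: transpose_def vec_eq_iff)

lemma bounded_linear_transpose: "bounded_linear (transpose :: real^'m^'n \<Rightarrow> real^'n^'m)"
  by (simp add: linear_conv_bounded_linear[symmetric] linear_iff vec_eq_iff transpose_def)

lemma nonzero_kernel_if_not_surj:
  fixes A :: "'a::field^'n^'n"
  assumes "w \<notin> range ((*v) A)"
  shows "\<exists>a. a \<noteq> 0 \<and> A *v a = 0"
  using assms matrix_left_invertible_ker[of A] matrix_right_invertible_surjective[of A]
    invertible_left_inverse[of A] invertible_right_inverse[of A]
  by auto

lemma frob_eq_inner: "frob A B = A \<bullet> B"
  by (simp add: frob_def trace_def inner_vec_def matrix_matrix_mult_def transpose_def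
      sum_distrib_left) (rule sum.swap)

lemma trace_mult_transpose_self: "trace (A ** transpose A) = A \<bullet> A"
  by (simp add: trace_def inner_vec_def matrix_matrix_mult_def transpose_def power2_eq_square)

lemma matrix_mult_transpose_outer: "A ** transpose (outer v e) = outer (A *v e) v"
  by (simp add: vec_eq_iff matrix_matrix_mult_def transpose_def outer_def matrix_vector_mult_def
      sum_distrib_left algebra_simps)

lemma outer_mult_transpose: "outer v e ** transpose A = outer v (A *v e)"
  by (simp add: vec_eq_iff matrix_matrix_mult_def transpose_def outer_def matrix_vector_mult_def
      sum_distrib_left algebra_simps)

lemma inner_outer: "A \<bullet> outer v e = (A *v e) \<bullet> v"
  by (simp add: inner_vec_def outer_def matrix_vector_mult_def sum_distrib_right sum_distrib_left
      algebra_simps)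

lemma outer_mult_transpose_outer:
  "outer v a ** transpose (outer w b) = (a \<bullet> b) *\<^sub>R outer v w"
  by (simp add: vec_eq_iff matrix_matrix_mult_def transpose_def outer_def inner_vec_def
      sum_distrib_left sum_distrib_right algebra_simps)

lemma inner_outer_outer: "outer v a \<bullet> outer w b = (v \<bullet> w) * (a \<bullet> b)"
  by (simp add: inner_vec_def outer_def sum_distrib_left sum_distrib_right algebra_simps)

lemma outer_zero [simp]: "outer 0 w = 0" "outer w 0 = 0"
  by (simp_all add: outer_def vec_eq_iff)

lemma matrix_mult_transpose_self_columns:
  "A ** transpose A = (\<Sum>j\<in>UNIV. outer (column j A) (column j A))"
  by (simp add: vec_eq_iff matrix_matrix_mult_def transpose_def outer_def column_def)

lemma inner_self_columns: "A \<bullet> A = (\<Sum>j\<in>UNIV. column j A \<bullet> column j A)"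
  by (simp add: inner_vec_def column_def) (rule sum.swap)

lemmas matrix_mult_has_derivative = bounded_bilinear.FDERIV[OF bounded_bilinear_matrix_matrix_mult]
lemmas transpose_has_derivative = bounded_linear.has_derivative[OF bounded_linear_transpose]

lemma hess_quad_eq:
  assumes "\<And>y. (f has_derivative Df y) (at y)"
    and "((\<lambda>y. Df y h) has_derivative D2f) (at x)"
  shows "hess_quad f x h = D2f h"
proof -
  have "(\<lambda>y. frechet_derivative f (at y) h) = (\<lambda>y. Df y h)"
    using frechet_derivative_at[OF assms(1)] by metis
  then show ?thesis
    unfolding hess_quad_def using frechet_derivative_at[OF assms(2)] by metis
qed

lemma stationary_derivative_eq_0:
  assumes "is_stationary f x" and "(f has_derivative Df) (at x)"
  shows "Df h = 0"
  using assms has_derivative_unique unfolding is_stationary_def by metis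

lemma local_min_imp_stationary:
  assumes "is_local_min f x" and "(f has_derivative Df) (at x)"
  shows "is_stationary f x"
proof -
  from assms(1) obtain e where "e > 0" "\<And>y. dist y x < e \<Longrightarrow> f x \<le> f y"
    unfolding is_local_min_def by blast
  then have "eventually (\<lambda>y. f x \<le> f y) (at x)"
    unfolding eventually_at by blast
  then have "Df = (\<lambda>h. 0)"
    by (rule has_derivative_local_min[OF assms(2)])
  then show ?thesis
    unfolding is_stationary_def using assms(2) by simp
qed

lemma global_min_imp_local_min: "is_global_min f x \<Longrightarrow> is_local_min f x"
  unfolding is_global_min_def is_local_min_def by (blast intro: zero_less_one)

lemma not_local_min_quartic_descent:
  fixes f :: "'a::real_normed_vector \<Rightarrow> real"
  assumes curve: "\<And>t. f (x + t *\<^sub>R h) = f x + a * t\<^sup>2 + b * t ^ 4" and "a < 0"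
  shows "\<not> is_local_min f x"
proof
  assume "is_local_min f x"
  then obtain e where "e > 0" and min: "\<And>y. dist y x < e \<Longrightarrow> f x \<le> f y"
    unfolding is_local_min_def by blast
  have "((\<lambda>t. x + t *\<^sub>R h) \<longlongrightarrow> x + 0 *\<^sub>R h) (at_right 0)"
    by (intro tendsto_intros)
  then have near: "\<forall>\<^sub>F t in at_right 0. dist (x + t *\<^sub>R h) x < e"
    using \<open>e > 0\<close> by (auto dest: tendstoD)
  have "((\<lambda>t. a + b * t\<^sup>2) \<longlongrightarrow> a + b * 0\<^sup>2) (at_right (0::real))"
    by (intro tendsto_intros)
  then have descent: "\<forall>\<^sub>F t in at_right 0. a + b * t\<^sup>2 < 0"
    using \<open>a < 0\<close> by (auto dest: order_tendstoD(2))
  obtain t :: real where "t > 0" "dist (x + t *\<^sub>R h) x < e" "a + b * t\<^sup>2 < 0"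
    using eventually_happens'[OF trivial_limit_at_right_real
        eventually_conj[OF eventually_at_right_less eventually_conj[OF near descent]]]
    by blast
  then have "t\<^sup>2 * (a + b * t\<^sup>2) < 0"
    by (simp add: mult_pos_neg)
  moreover have "f x \<le> f x + t\<^sup>2 * (a + b * t\<^sup>2)"
    using min[OF \<open>dist _ _ < e\<close>] curve[of t]
    by (simp add: algebra_simps power4_eq_xxxx power2_eq_square)
  ultimately show False by simp
qed

type_synonym 'd mat_pair = "(real^'d^'d) \<times> (real^'d^'d)"

locale factored_sensing =
  fixes n :: nat and ii jj :: "nat \<Rightarrow> 'd::finite" and y :: "nat \<Rightarrow> real" and lam :: real
begin

abbreviation meas :: "nat \<Rightarrow> real^'d^'d" where "meas k \<equiv> Pmat (ii k) (jj k)"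

definition gram_diff :: "'d mat_pair \<Rightarrow> real^'d^'d" where
  "gram_diff z = fst z ** transpose (fst z) - snd z ** transpose (snd z)"

definition gram_diff_deriv :: "'d mat_pair \<Rightarrow> 'd mat_pair \<Rightarrow> real^'d^'d" where
  "gram_diff_deriv z h = fst z ** transpose (fst h) + fst h ** transpose (fst z)
     - (snd z ** transpose (snd h) + snd h ** transpose (snd z))"

definition resid :: "'d mat_pair \<Rightarrow> nat \<Rightarrow> real" where
  "resid z k = meas k \<bullet> gram_diff z - y k"

definition data_grad :: "'d mat_pair \<Rightarrow> real^'d^'d" where
  "data_grad z = (2 / real n) *\<^sub>R (\<Sum>k<n. resid z k *\<^sub>R meas k)"

definition loss :: "'d mat_pair \<Rightarrow> real" where
  "loss z = (1 / real n) * (\<Sum>k<n. (resid z k)\<^sup>2)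
     + (lam / 2) * (fst z \<bullet> fst z + snd z \<bullet> snd z)"

definition loss_deriv :: "'d mat_pair \<Rightarrow> 'd mat_pair \<Rightarrow> real" where
  "loss_deriv z h = data_grad z \<bullet> gram_diff_deriv z h + lam * (fst z \<bullet> fst h + snd z \<bullet> snd h)"

definition loss_hess :: "'d mat_pair \<Rightarrow> 'd mat_pair \<Rightarrow> 'd mat_pair \<Rightarrow> real" where
  "loss_hess z h q =
     (2 / real n) * (\<Sum>k<n. (meas k \<bullet> gram_diff_deriv z q) * (meas k \<bullet> gram_diff_deriv z h))
     + data_grad z \<bullet> gram_diff_deriv q h + lam * (fst q \<bullet> fst h + snd q \<bullet> snd h)"

lemma lossL_eq_loss: "lossL n ii jj y lam = loss"
  by (simp add: fun_eq_iff lossL_def loss_def resid_def gram_diff_def frob_eq_inner trace_add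
      trace_mult_transpose_self)

lemma inner_data_grad: "data_grad z \<bullet> M = (2 / real n) * (\<Sum>k<n. resid z k * (meas k \<bullet> M))"
  by (simp add: data_grad_def inner_sum_left sum_distrib_left)

lemma gram_diff_has_derivative: "(gram_diff has_derivative gram_diff_deriv z) (at z)"
  unfolding gram_diff_def[abs_def]
  by (rule has_derivative_eq_rhs,
      (rule derivative_intros matrix_mult_has_derivative transpose_has_derivative)+)
     (auto simp: gram_diff_deriv_def fun_eq_iff)

lemma gram_diff_deriv_has_derivative:
  "((\<lambda>z. gram_diff_deriv z h) has_derivative (\<lambda>q. gram_diff_deriv q h)) (at z)"
  unfolding gram_diff_deriv_def[abs_def]
  by (rule has_derivative_eq_rhs,
      (rule derivative_intros matrix_mult_has_derivative transpose_has_derivative)+)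
     (auto simp: fun_eq_iff)

lemma resid_has_derivative:
  "((\<lambda>z. resid z k) has_derivative (\<lambda>h. meas k \<bullet> gram_diff_deriv z h)) (at z)"
  unfolding resid_def[abs_def]
  by (rule has_derivative_eq_rhs, (rule derivative_intros gram_diff_has_derivative)+) simp

lemma loss_has_derivative: "(loss has_derivative loss_deriv z) (at z)"
  unfolding loss_def[abs_def] power2_eq_square
  by (rule has_derivative_eq_rhs, (rule derivative_intros resid_has_derivative)+)
     (auto simp: fun_eq_iff loss_deriv_def inner_data_grad sum_distrib_left sum.distrib
       algebra_simps inner_commute[of _ "fst z"] inner_commute[of _ "snd z"])

lemma loss_deriv_has_derivative: "((\<lambda>z. loss_deriv z h) has_derivative loss_hess z h) (at z)"
  unfolding loss_deriv_def[abs_def] inner_data_grad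
  by (rule has_derivative_eq_rhs,
      (rule derivative_intros resid_has_derivative gram_diff_deriv_has_derivative)+)
     (auto simp: fun_eq_iff loss_hess_def inner_data_grad sum_distrib_left sum.distrib algebra_simps)

lemma hess_quad_loss: "hess_quad loss z h = loss_hess z h h"
  by (rule hess_quad_eq[OF loss_has_derivative loss_deriv_has_derivative])

lemma stationary_loss_deriv: "is_stationary loss z \<Longrightarrow> loss_deriv z h = 0"
  by (rule stationary_derivative_eq_0[OF _ loss_has_derivative])

lemma gram_diff_add_scaleR:
  "gram_diff (z + t *\<^sub>R h) = gram_diff z + t *\<^sub>R gram_diff_deriv z h + t\<^sup>2 *\<^sub>R gram_diff h"
  by (simp add: gram_diff_def gram_diff_deriv_def vec_eq_iff matrix_matrix_mult_def transpose_def
      sum.distrib sum_distrib_left algebra_simps power2_eq_square sum_subtractf)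

lemma gram_diff_deriv_self: "gram_diff_deriv h h = 2 *\<^sub>R gram_diff h"
  by (simp add: gram_diff_def gram_diff_deriv_def algebra_simps scaleR_2)

lemma loss_along_flat_direction:
  assumes "is_stationary loss z" and flat: "gram_diff_deriv z h = 0"
  shows "loss (z + t *\<^sub>R h) = loss z + (loss_hess z h h / 2) * t\<^sup>2
           + ((1 / real n) * (\<Sum>k<n. (meas k \<bullet> gram_diff h)\<^sup>2)) * t ^ 4"
proof -
  have "loss_deriv z h = 0"
    using assms(1) by (rule stationary_loss_deriv)
  then have orth: "lam * (fst z \<bullet> fst h + snd z \<bullet> snd h) = 0"
    by (simp add: loss_deriv_def flat)
  have resid: "resid (z + t *\<^sub>R h) k = resid z k + t\<^sup>2 * (meas k \<bullet> gram_diff h)" for k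
    by (simp add: resid_def gram_diff_add_scaleR flat inner_add_right)
  have hess: "loss_hess z h h
      = data_grad z \<bullet> (2 *\<^sub>R gram_diff h) + lam * (fst h \<bullet> fst h + snd h \<bullet> snd h)"
    by (simp add: loss_hess_def flat gram_diff_deriv_self)
  have data: "(1 / real n) * (\<Sum>k<n. (resid (z + t *\<^sub>R h) k)\<^sup>2)
      = (1 / real n) * (\<Sum>k<n. (resid z k)\<^sup>2) + t\<^sup>2 * (data_grad z \<bullet> gram_diff h)
        + t ^ 4 * ((1 / real n) * (\<Sum>k<n. (meas k \<bullet> gram_diff h)\<^sup>2))"
    by (simp add: resid inner_data_grad power2_sum sum.distrib sum_distrib_left algebra_simps
        power2_eq_square power4_eq_xxxx)
  have "(lam / 2) * (fst (z + t *\<^sub>R h) \<bullet> fst (z + t *\<^sub>R h) + snd (z + t *\<^sub>R h) \<bullet> snd (z + t *\<^sub>R h))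
      = (lam / 2) * (fst z \<bullet> fst z + snd z \<bullet> snd z) + t * (lam * (fst z \<bullet> fst h + snd z \<bullet> snd h))
        + t\<^sup>2 * ((lam / 2) * (fst h \<bullet> fst h + snd h \<bullet> snd h))"
    by (simp add: inner_add_left inner_add_right inner_commute algebra_simps power2_eq_square)
  also have "\<dots> = (lam / 2) * (fst z \<bullet> fst z + snd z \<bullet> snd z)
        + t\<^sup>2 * ((lam / 2) * (fst h \<bullet> fst h + snd h \<bullet> snd h))"
    using orth by simp
  finally show ?thesis
    unfolding loss_def data hess by (simp add: algebra_simps)
qed

lemma not_local_min_if_flat_descent:
  assumes "is_stationary loss z" "gram_diff_deriv z h = 0" "loss_hess z h h < 0"
  shows "\<not> is_local_min loss z"
  using not_local_min_quartic_descent[OF loss_along_flat_direction[OF assms(1,2)]] assms(3)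
  by simp

definition curv_U :: "'d mat_pair \<Rightarrow> real^'d \<Rightarrow> real" where
  "curv_U z w = 2 * (data_grad z \<bullet> outer w w) + lam * (w \<bullet> w)"

definition curv_V :: "'d mat_pair \<Rightarrow> real^'d \<Rightarrow> real" where
  "curv_V z w = - 2 * (data_grad z \<bullet> outer w w) + lam * (w \<bullet> w)"

lemma loss_deriv_rank_one_U:
  "fst z *v e = w \<Longrightarrow> loss_deriv z (outer w e, 0) = curv_U z w"
  unfolding loss_deriv_def gram_diff_deriv_def curv_U_def fst_conv snd_conv
    matrix_mult_transpose_outer outer_mult_transpose inner_add_right inner_diff_right
  by (simp add: inner_outer)

lemma loss_deriv_rank_one_V:
  "snd z *v e = w \<Longrightarrow> loss_deriv z (0, outer w e) = curv_V z w"
  unfolding loss_deriv_def gram_diff_deriv_def curv_V_def fst_conv snd_conv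
    matrix_mult_transpose_outer outer_mult_transpose inner_add_right inner_diff_right
  by (simp add: inner_outer)

lemma loss_hess_rank_one_U:
  assumes "fst z *v a = 0"
  shows "gram_diff_deriv z (outer w a, 0) = 0"
    and "loss_hess z (outer w a, 0) (outer w a, 0) = (a \<bullet> a) * curv_U z w"
proof -
  show flat: "gram_diff_deriv z (outer w a, 0) = 0"
    using assms by (simp add: gram_diff_deriv_def matrix_mult_transpose_outer outer_mult_transpose)
  show "loss_hess z (outer w a, 0) (outer w a, 0) = (a \<bullet> a) * curv_U z w"
    unfolding loss_hess_def flat gram_diff_deriv_self
    by (simp add: gram_diff_def outer_mult_transpose_outer inner_outer_outer curv_U_def
        algebra_simps)
qed

lemma loss_hess_rank_one_V:
  assumes "snd z *v a = 0"
  shows "gram_diff_deriv z (0, outer w a) = 0"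
    and "loss_hess z (0, outer w a) (0, outer w a) = (a \<bullet> a) * curv_V z w"
proof -
  show flat: "gram_diff_deriv z (0, outer w a) = 0"
    using assms by (simp add: gram_diff_deriv_def matrix_mult_transpose_outer outer_mult_transpose)
  show "loss_hess z (0, outer w a) (0, outer w a) = (a \<bullet> a) * curv_V z w"
    unfolding loss_hess_def flat gram_diff_deriv_self
    by (simp add: gram_diff_def outer_mult_transpose_outer inner_outer_outer curv_V_def
        algebra_simps)
qed

lemma singular_if_curv_U_neg:
  assumes "is_stationary loss z" and "curv_U z w < 0"
  shows "\<exists>a. a \<noteq> 0 \<and> fst z *v a = 0"
proof (rule nonzero_kernel_if_not_surj)
  show "w \<notin> range ((*v) (fst z))"
  proof
    assume "w \<in> range ((*v) (fst z))"
    then obtain e where "fst z *v e = w" by blast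
    then have "curv_U z w = loss_deriv z (outer w e, 0)"
      by (rule loss_deriv_rank_one_U[symmetric])
    with assms show False
      using stationary_loss_deriv by simp
  qed
qed

lemma singular_if_curv_V_neg:
  assumes "is_stationary loss z" and "curv_V z w < 0"
  shows "\<exists>a. a \<noteq> 0 \<and> snd z *v a = 0"
proof (rule nonzero_kernel_if_not_surj)
  show "w \<notin> range ((*v) (snd z))"
  proof
    assume "w \<in> range ((*v) (snd z))"
    then obtain e where "snd z *v e = w" by blast
    then have "curv_V z w = loss_deriv z (0, outer w e)"
      by (rule loss_deriv_rank_one_V[symmetric])
    with assms show False
      using stationary_loss_deriv by simp
  qed
qed

lemma flat_descent_if_curv_neg:
  assumes "is_stationary loss z" and "curv_U z w < 0 \<or> curv_V z w < 0"
  shows "\<exists>h. gram_diff_deriv z h = 0 \<and> loss_hess z h h < 0"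
  using assms(2)
proof
  assume "curv_U z w < 0"
  moreover obtain a where "a \<noteq> 0" "fst z *v a = 0"
    using singular_if_curv_U_neg[OF assms(1) \<open>curv_U z w < 0\<close>] by blast
  ultimately show ?thesis
    using loss_hess_rank_one_U[of z a w]
    by (intro exI[of _ "(outer w a, 0)"]) (simp add: mult_pos_neg)
next
  assume "curv_V z w < 0"
  moreover obtain a where "a \<noteq> 0" "snd z *v a = 0"
    using singular_if_curv_V_neg[OF assms(1) \<open>curv_V z w < 0\<close>] by blast
  ultimately show ?thesis
    using loss_hess_rank_one_V[of z a w]
    by (intro exI[of _ "(0, outer w a)"]) (simp add: mult_pos_neg)
qed

lemma data_fit_ge_linearization:
  "(1 / real n) * (\<Sum>k<n. (resid z' k)\<^sup>2)
     \<ge> (1 / real n) * (\<Sum>k<n. (resid z k)\<^sup>2) + data_grad z \<bullet> (gram_diff z' - gram_diff z)"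
proof -
  have "(resid z' k)\<^sup>2
      \<ge> (resid z k)\<^sup>2 + 2 * resid z k * (meas k \<bullet> (gram_diff z' - gram_diff z))" for k
  proof -
    have "resid z' k = resid z k + meas k \<bullet> (gram_diff z' - gram_diff z)"
      by (simp add: resid_def inner_diff_right)
    then show ?thesis
      by (simp add: power2_sum)
  qed
  then have "(\<Sum>k<n. (resid z' k)\<^sup>2)
      \<ge> (\<Sum>k<n. (resid z k)\<^sup>2 + 2 * resid z k * (meas k \<bullet> (gram_diff z' - gram_diff z)))"
    by (rule sum_mono)
  then have "(1 / real n) * (\<Sum>k<n. (resid z' k)\<^sup>2)
      \<ge> (1 / real n)
          * (\<Sum>k<n. (resid z k)\<^sup>2 + 2 * resid z k * (meas k \<bullet> (gram_diff z' - gram_diff z)))"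
    by (rule mult_left_mono) simp
  then show ?thesis
    by (simp add: inner_data_grad sum.distrib sum_subtractf sum_distrib_left algebra_simps)
qed

lemma curv_U_columns:
  "2 * (data_grad z \<bullet> (M ** transpose M)) + lam * (M \<bullet> M)
     = (\<Sum>j\<in>UNIV. curv_U z (column j M))"
  by (simp add: matrix_mult_transpose_self_columns inner_self_columns[of M] curv_U_def
      inner_sum_right sum.distrib sum_distrib_left)

lemma curv_V_columns:
  "- 2 * (data_grad z \<bullet> (M ** transpose M)) + lam * (M \<bullet> M)
     = (\<Sum>j\<in>UNIV. curv_V z (column j M))"
  by (simp add: matrix_mult_transpose_self_columns inner_self_columns[of M] curv_V_def
      inner_sum_right sum_subtractf sum_distrib_left sum_negf)

lemma global_min_if_curv_nonneg:
  assumes "is_stationary loss z" and curv: "\<And>w. curv_U z w \<ge> 0" "\<And>w. curv_V z w \<ge> 0"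
  shows "is_global_min loss z"
  unfolding is_global_min_def
proof
  fix z' :: "'d mat_pair"
  have "loss_deriv z z = 0"
    using assms(1) by (rule stationary_loss_deriv)
  then have euler:
      "(lam / 2) * (fst z \<bullet> fst z + snd z \<bullet> snd z) = - (data_grad z \<bullet> gram_diff z)"
    by (simp add: loss_deriv_def gram_diff_deriv_self)
  have "0 \<le> (\<Sum>j\<in>UNIV. curv_U z (column j (fst z')))"
    and "0 \<le> (\<Sum>j\<in>UNIV. curv_V z (column j (snd z')))"
    using curv by (simp_all add: sum_nonneg)
  then have "0 \<le> data_grad z \<bullet> gram_diff z'
      + (lam / 2) * (fst z' \<bullet> fst z' + snd z' \<bullet> snd z')"
    unfolding curv_U_columns[symmetric] curv_V_columns[symmetric]
    by (simp add: gram_diff_def inner_diff_right algebra_simps)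
  then show "loss z \<le> loss z'"
    using data_fit_ge_linearization[of z z'] euler
    by (simp add: loss_def inner_diff_right algebra_simps)
qed

lemma local_min_imp_global_min:
  assumes min: "is_local_min loss z"
  shows "is_global_min loss z"
proof -
  have st: "is_stationary loss z"
    using local_min_imp_stationary[OF min loss_has_derivative] .
  have "curv_U z w \<ge> 0 \<and> curv_V z w \<ge> 0" for w
    using flat_descent_if_curv_neg[OF st, of w] not_local_min_if_flat_descent[OF st] min by force
  then show ?thesis
    using global_min_if_curv_nonneg[OF st] by blast
qed

lemma saddle_imp_hess_quad_neg:
  assumes "is_saddle loss z"
  shows "\<exists>h. hess_quad loss z h < 0"
proof -
  have st: "is_stationary loss z" and "\<not> is_global_min loss z"
    using assms global_min_imp_local_min unfolding is_saddle_def by blast+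
  then obtain w where "curv_U z w < 0 \<or> curv_V z w < 0"
    using global_min_if_curv_nonneg[OF st] by (meson not_le)
  then obtain h where "loss_hess z h h < 0"
    using flat_descent_if_curv_neg[OF st] by blast
  then show ?thesis
    unfolding hess_quad_loss by blast
qed

end

theorem theoremF1:
  fixes n :: nat and ii jj :: "nat \<Rightarrow> 'd::finite" and y :: "nat \<Rightarrow> real" and lam :: real
  assumes "lam > 0"
  shows "(\<forall>UV. is_local_min (lossL n ii jj y lam) UV \<longrightarrow> is_global_min (lossL n ii jj y lam) UV)
       \<and> (\<forall>UVs. is_saddle (lossL n ii jj y lam) UVs \<longrightarrow>
             (\<exists>E :: (real^'d^'d) \<times> (real^'d^'d). hess_quad (lossL n ii jj y lam) UVs E < 0))"
proof -
  \<comment> \<open>The argument does not use \<open>lam > 0\<close>.\<close>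
  interpret factored_sensing n ii jj y lam .
  show ?thesis
    unfolding lossL_eq_loss using local_min_imp_global_min saddle_imp_hess_quad_neg by blast
qed

end
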